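(* Let $f$ satisfy the $L$-descent condition for some $L>0$ and let $\{x^k\}$ be generated by Algorithm IRG with $\rho_k=\varepsilon_k$ for all $k$, where the stepsizes are either diminishing ($t_k>0$, $t_k\downarrow0$, $\sum_{k=1}^\infty t_k=\infty$) or of constant type (there exist $\delta\in(0,2)$ and $\delta'>0$ with $\delta'\le\frac{2-\delta}{L}$ and $t_k\in[\delta',\frac{2-\delta}{L}]$ for all $k$). Assume $\inf_k f(x^k)>-\infty$. Then: (i) $\varepsilon_k\downarrow0$ and $r_k\downarrow0$; (ii) every accumulation point of $\{x^k\}$ is a stationary point of $f$; (iii) if $\{x^k\}$ is bounded, its set of accumulation points is nonempty, compact and connected; (iv) if $\{x^k\}$ has an isolated accumulation point, then $\{x^k\}$ converges to it. Moreover, in the constant-type case, $\nabla f(x^k)\to0$ as $k\to\infty$.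
   Context: Algorithm IRG (general inexact reduced gradient framework). Let $f:\mathbb R^n\to\mathbb R$ be continuously differentiable. Parameters: initial point $x^1\in\mathbb R^n$, initial radii $\varepsilon_1>0$, $r_1>0$, reduction factors $\mu,\theta\in(0,1)$, and a sequence $\{\rho_k\}$ of positive numbers. For $k=1,2,\dots$: (1) choose $g^k\in\mathbb R^n$ with $\|g^k-\nabla f(x^k)\|\le\min\{\varepsilon_k,\rho_k\}$; (2) if $\|g^k\|\le r_k+\varepsilon_k$, set $r_{k+1}=\mu r_k$, $\varepsilon_{k+1}=\theta\varepsilon_k$, $d^k=0$; otherwise set $r_{k+1}=r_k$, $\varepsilon_{k+1}=\varepsilon_k$ and $d^k=-\frac{\|g^k\|-\varepsilon_k}{\|g^k\|}g^k$; (3) choose a stepsize $t_k>0$ by some rule; (4) set $x^{k+1}=x^k+t_kd^k$. $f$ satisfies the $L$-descent condition if $f(y)\le f(x)+\langle\nabla f(x),y-x\rangle+\frac L2\|y-x\|^2$ for all $x,y\in\mathbb R^n$. *)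

theory Defs
  imports "HOL-Analysis.Analysis"
begin

definition C1_with_gradient :: "('a::euclidean_space \<Rightarrow> real) \<Rightarrow> ('a \<Rightarrow> 'a) \<Rightarrow> bool" where
  "C1_with_gradient f df \<longleftrightarrow>
     (\<forall>x. (f has_derivative (\<lambda>h. df x \<bullet> h)) (at x)) \<and> continuous_on UNIV df"

definition L_descent :: "('a::euclidean_space \<Rightarrow> real) \<Rightarrow> ('a \<Rightarrow> 'a) \<Rightarrow> real \<Rightarrow> bool" where
  "L_descent f df L \<longleftrightarrow>
     (\<forall>x y. f y \<le> f x + df x \<bullet> (y - x) + L / 2 * (norm (y - x))\<^sup>2)"

text \<open>Algorithm IRG (indices start at 0 instead of 1), with inexactness sequence rho.\<close>
definition IRG ::
  "('a::euclidean_space \<Rightarrow> 'a) \<Rightarrow> real \<Rightarrow> real \<Rightarrow> (nat \<Rightarrow> real) \<Rightarrow>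
   (nat \<Rightarrow> 'a) \<Rightarrow> (nat \<Rightarrow> 'a) \<Rightarrow> (nat \<Rightarrow> real) \<Rightarrow> (nat \<Rightarrow> real) \<Rightarrow>
   (nat \<Rightarrow> 'a) \<Rightarrow> (nat \<Rightarrow> real) \<Rightarrow> bool" where
  "IRG df \<mu> \<theta> \<rho> x g eps r d t \<longleftrightarrow>
     eps 0 > 0 \<and> r 0 > 0 \<and> 0 < \<mu> \<and> \<mu> < 1 \<and> 0 < \<theta> \<and> \<theta> < 1 \<and> (\<forall>k. \<rho> k > 0) \<and>
     (\<forall>k. norm (g k - df (x k)) \<le> min (eps k) (\<rho> k)) \<and>
     (\<forall>k. if norm (g k) \<le> r k + eps k
           then r (Suc k) = \<mu> * r k \<and> eps (Suc k) = \<theta> * eps k \<and> d k = 0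
           else r (Suc k) = r k \<and> eps (Suc k) = eps k \<and>
                d k = - ((norm (g k) - eps k) / norm (g k)) *\<^sub>R g k) \<and>
     (\<forall>k. t k > 0) \<and>
     (\<forall>k. x (Suc k) = x k + t k *\<^sub>R d k)"

definition diminishing_steps :: "(nat \<Rightarrow> real) \<Rightarrow> bool" where
  "diminishing_steps t \<longleftrightarrow> (\<forall>k. t k > 0) \<and> decseq t \<and> t \<longlonglongrightarrow> 0 \<and>
     filterlim (\<lambda>n. \<Sum>k<n. t k) at_top sequentially"

definition constant_type_steps :: "real \<Rightarrow> (nat \<Rightarrow> real) \<Rightarrow> bool" where
  "constant_type_steps L t \<longleftrightarrow> (\<exists>\<delta> \<delta>'. 0 < \<delta> \<and> \<delta> < 2 \<and> 0 < \<delta>' \<and> \<delta>' \<le> (2 - \<delta>) / L \<and>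
     (\<forall>k. \<delta>' \<le> t k \<and> t k \<le> (2 - \<delta>) / L))"

definition accumulation_points :: "(nat \<Rightarrow> 'a::metric_space) \<Rightarrow> 'a set" where
  "accumulation_points x = {a. \<exists>s. strict_mono s \<and> (x \<circ> s) \<longlonglongrightarrow> a}"

end

theory Submission
  imports Defs
begin

text \<open>
  Every iteration decreases \<open>f\<close> by at least a fixed multiple of \<open>t\<^sub>k \<parallel>d\<^sup>k\<parallel>\<^sup>2\<close>, because the
  shortened inexact direction is a descent direction with \<open>\<langle>\<nabla>f(x\<^sup>k), d\<^sup>k\<rangle> \<le> -\<parallel>d\<^sup>k\<parallel>\<^sup>2\<close> and
  the steps are short compared to \<open>2/L\<close>. As \<open>f\<close> is bounded below while \<open>\<Sum> t\<^sub>k = \<infinity>\<close>, the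
  directions cannot stay longer than the fixed radius \<open>r\<^sub>k\<close>, so null steps occur infinitely
  often and \<open>\<epsilon>\<^sub>k, r\<^sub>k \<rightarrow> 0\<close>; then \<open>\<parallel>d\<^sup>k\<parallel>\<close> approximates \<open>\<parallel>\<nabla>f(x\<^sup>k)\<parallel>\<close>. Near a
  non-stationary accumulation point the decrease dominates the travelled distance, so the
  iterates would be trapped there and \<open>f\<close> would decrease without bound. Finally
  \<open>\<parallel>x\<^sup>k\<^sup>+\<^sup>1 - x\<^sup>k\<parallel> \<rightarrow> 0\<close>, and for such sequences the set of accumulation points is connected
  when bounded and a singleton as soon as one of its points is isolated.
\<close>

section \<open>Accumulation points of sequences\<close>

lemma accumulation_points_iff_frequently:
  fixes x :: "nat \<Rightarrow> 'a::metric_space"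
  shows "a \<in> accumulation_points x \<longleftrightarrow> (\<forall>e>0. \<exists>\<^sub>F n in sequentially. dist (x n) a < e)"
proof
  assume "a \<in> accumulation_points x"
  then obtain s where s: "strict_mono s" "(x \<circ> s) \<longlonglongrightarrow> a"
    by (auto simp: accumulation_points_def)
  show "\<forall>e>0. \<exists>\<^sub>F n in sequentially. dist (x n) a < e"
  proof (intro allI impI)
    fix e :: real assume "e > 0"
    then obtain M where M: "\<forall>j\<ge>M. dist (x (s j)) a < e"
      using s(2) unfolding lim_sequentially by auto
    show "\<exists>\<^sub>F n in sequentially. dist (x n) a < e"
      unfolding frequently_sequentially
    proof
      fix N
      have "N \<le> s (max M N)"
        using seq_suble[OF s(1), of "max M N"] by linarith
      then show "\<exists>n\<ge>N. dist (x n) a < e"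
        using M by auto
    qed
  qed
next
  assume near: "\<forall>e>0. \<exists>\<^sub>F n in sequentially. dist (x n) a < e"
  have ex: "\<exists>n. i < n \<and> dist (x n) a < inverse (Suc j)" for j i
  proof -
    have "\<forall>N. \<exists>n\<ge>N. dist (x n) a < inverse (Suc j)"
      using near[rule_format, of "inverse (Suc j)"] unfolding frequently_sequentially by simp
    then obtain n where "n \<ge> Suc i" "dist (x n) a < inverse (Suc j)"
      by blast
    then show ?thesis
      by (intro exI[of _ n]) simp
  qed
  define s where "s j i = (SOME n. i < n \<and> dist (x n) a < inverse (Suc j))" for j i
  have s: "i < s j i \<and> dist (x (s j i)) a < inverse (Suc j)" for j i
    unfolding s_def by (rule someI_ex[OF ex])
  define r where "r = rec_nat (s 0 0) s"
  have r_Suc: "r (Suc j) = s j (r j)" for j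
    by (simp add: r_def)
  have "strict_mono r"
    by (simp add: strict_mono_Suc_iff r_Suc s)
  moreover have "(x \<circ> r) \<longlonglongrightarrow> a"
  proof -
    have "dist (x (r (Suc j))) a < inverse (Suc j)" for j
      unfolding r_Suc using s by blast
    then have "norm (dist (x (r (Suc j))) a) \<le> inverse (Suc j)" for j
      by (simp add: less_imp_le)
    then have "(\<lambda>j. dist (x (r (Suc j))) a) \<longlonglongrightarrow> 0"
      by (rule Lim_null_comparison[OF always_eventually[OF allI] LIMSEQ_inverse_real_of_nat])
    then have "(\<lambda>j. dist (x (r j)) a) \<longlonglongrightarrow> 0"
      by (rule filterlim_sequentially_Suc[THEN iffD1])
    then show ?thesis
      unfolding o_def by (rule tendsto_dist_iff[THEN iffD2])
  qed
  ultimately show "a \<in> accumulation_points x"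
    by (auto simp: accumulation_points_def)
qed

lemma accumulation_points_eq_Inter_closure:
  fixes x :: "nat \<Rightarrow> 'a::metric_space"
  shows "accumulation_points x = (\<Inter>N. closure (x ` {N..}))"
proof -
  have "a \<in> closure (x ` {N..}) \<longleftrightarrow> (\<forall>e>0. \<exists>n\<ge>N. dist (x n) a < e)" for a N
    by (auto simp: closure_approachable)
  then show ?thesis
    by (auto simp: accumulation_points_iff_frequently frequently_sequentially)
qed

lemma closed_accumulation_points: "closed (accumulation_points x)"
  by (simp add: accumulation_points_eq_Inter_closure closed_INT)

lemma accumulation_points_subset_closure: "accumulation_points x \<subseteq> closure (range x)"
  unfolding accumulation_points_eq_Inter_closure by (metis INT_lower UNIV_I atLeast_0)

lemma frequently_in_compact_imp_accumulation_point:
  fixes x :: "nat \<Rightarrow> 'a::metric_space"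
  assumes "compact K" and "\<exists>\<^sub>F n in sequentially. x n \<in> K"
  obtains a where "a \<in> K" and "a \<in> accumulation_points x"
proof -
  have "infinite {n. x n \<in> K}"
    using assms(2) by (simp add: frequently_sequentially infinite_nat_iff_unbounded_le)
  then obtain r :: "nat \<Rightarrow> nat" where r: "strict_mono r" "\<And>n. x (r n) \<in> K"
    using infinite_enumerate by blast
  then obtain a q where "a \<in> K" "strict_mono q" "((x \<circ> r) \<circ> q) \<longlonglongrightarrow> a"
    using compact_imp_seq_compact[OF assms(1)] unfolding seq_compact_def by (metis comp_apply)
  moreover have "strict_mono (r \<circ> q)"
    using r(1) \<open>strict_mono q\<close> by (rule strict_mono_o)
  ultimately have "a \<in> accumulation_points x"
    unfolding accumulation_points_def by (intro CollectI exI[of _ "r \<circ> q"]) (simp add: o_assoc)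
  then show ?thesis
    using that \<open>a \<in> K\<close> by blast
qed

lemma frequently_outside_separated_sets:
  fixes x :: "nat \<Rightarrow> 'a::metric_space"
  assumes steps: "(\<lambda>n. dist (x (Suc n)) (x n)) \<longlonglongrightarrow> 0"
    and "\<delta> > 0" and sep: "\<forall>y\<in>S. \<forall>z\<in>T. \<delta> \<le> dist y z"
    and S: "\<exists>\<^sub>F n in sequentially. x n \<in> S" and T: "\<exists>\<^sub>F n in sequentially. x n \<in> T"
  shows "\<exists>\<^sub>F n in sequentially. x n \<notin> S \<union> T"
  unfolding frequently_sequentially
proof
  fix N
  obtain N0 where N0: "\<And>n. n \<ge> N0 \<Longrightarrow> dist (x n) (x (Suc n)) < \<delta>"
    using order_tendstoD(2)[OF steps \<open>\<delta> > 0\<close>]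
    unfolding eventually_sequentially by (auto simp: dist_commute)
  obtain n where n: "n \<ge> max N N0" "x n \<in> S"
    using S unfolding frequently_sequentially by blast
  obtain m where m: "m \<ge> n" "x m \<in> T"
    using T unfolding frequently_sequentially by blast
  show "\<exists>j\<ge>N. x j \<notin> S \<union> T"
  proof (rule ccontr)
    assume "\<not> (\<exists>j\<ge>N. x j \<notin> S \<union> T)"
    then have inside: "x j \<in> S \<union> T" if "j \<ge> N" for j
      using that by blast
    have "x j \<in> S" if "n \<le> j" for j
      using that
    proof (induction rule: dec_induct)
      case base
      show ?case using n(2) .
    next
      case (step j)
      have "x (Suc j) \<notin> T"
        using sep step.IH N0[of j] step.hyps(1) n(1) by force
      then show ?case
        using inside[of "Suc j"] step.hyps(1) n(1) by auto
    qed
    then show False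
      using m sep \<open>\<delta> > 0\<close> by force
  qed
qed

lemma isolated_accumulation_point_imp_LIMSEQ:
  fixes x :: "nat \<Rightarrow> 'a::heine_borel"
  assumes steps: "(\<lambda>n. dist (x (Suc n)) (x n)) \<longlonglongrightarrow> 0"
    and a: "a \<in> accumulation_points x" and "e > 0"
    and isolated: "\<forall>b\<in>accumulation_points x. dist b a < e \<longrightarrow> b = a"
  shows "x \<longlonglongrightarrow> a"
proof (rule ccontr)
  assume "\<not> x \<longlonglongrightarrow> a"
  then obtain e0 where "e0 > 0" and far: "\<exists>\<^sub>F n in sequentially. e0 \<le> dist (x n) a"
    unfolding tendsto_iff by (auto simp: not_eventually not_less)
  define \<epsilon> where "\<epsilon> = min e e0 / 3"
  have \<epsilon>: "\<epsilon> > 0" "2 * \<epsilon> < e" "2 * \<epsilon> \<le> e0"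
    using \<open>e > 0\<close> \<open>e0 > 0\<close> by (auto simp: \<epsilon>_def)
  have sep: "\<forall>y\<in>{y. dist y a < \<epsilon>}. \<forall>z\<in>{z. 2 * \<epsilon> \<le> dist z a}. \<epsilon> \<le> dist y z"
  proof (intro ballI)
    fix y z assume "y \<in> {y. dist y a < \<epsilon>}" "z \<in> {z. 2 * \<epsilon> \<le> dist z a}"
    moreover have "dist z a \<le> dist z y + dist y a"
      by (rule dist_triangle)
    ultimately show "\<epsilon> \<le> dist y z"
      by (simp add: dist_commute)
  qed
  have "\<exists>\<^sub>F n in sequentially. x n \<in> {y. dist y a < \<epsilon>}"
    using a \<epsilon>(1) unfolding accumulation_points_iff_frequently by simp
  moreover have "\<exists>\<^sub>F n in sequentially. x n \<in> {z. 2 * \<epsilon> \<le> dist z a}"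
    using far by (rule frequently_elim1) (use \<epsilon>(3) in simp)
  ultimately have "\<exists>\<^sub>F n in sequentially. x n \<notin> {y. dist y a < \<epsilon>} \<union> {z. 2 * \<epsilon> \<le> dist z a}"
    by (rule frequently_outside_separated_sets[OF steps \<epsilon>(1) sep])
  then have "\<exists>\<^sub>F n in sequentially. x n \<in> cball a (2 * \<epsilon>) - ball a \<epsilon>"
    by (rule frequently_elim1) (auto simp: dist_commute)
  then obtain b where b: "b \<in> cball a (2 * \<epsilon>) - ball a \<epsilon>" "b \<in> accumulation_points x"
    by (rule frequently_in_compact_imp_accumulation_point[OF compact_diff[OF compact_cball open_ball]])
  then have "dist b a < e" "b \<noteq> a"
    using \<epsilon> by (auto simp: dist_commute)
  then show False
    using isolated b(2) by blast
qed

lemma compact_accumulation_points: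
  fixes x :: "nat \<Rightarrow> 'a::heine_borel"
  assumes "bounded (range x)"
  shows "compact (accumulation_points x)"
proof -
  have "bounded (accumulation_points x)"
    using bounded_subset[OF bounded_closure[OF assms] accumulation_points_subset_closure] .
  then show ?thesis
    by (simp add: compact_eq_bounded_closed closed_accumulation_points)
qed

lemma accumulation_points_nonempty:
  fixes x :: "nat \<Rightarrow> 'a::heine_borel"
  assumes "bounded (range x)"
  shows "accumulation_points x \<noteq> {}"
proof -
  have "compact (closure (range x))"
    using assms by simp
  moreover have "\<exists>\<^sub>F n in sequentially. x n \<in> closure (range x)"
    unfolding frequently_sequentially by (auto intro: closure_subset[THEN subsetD])
  ultimately obtain a where "a \<in> closure (range x)" "a \<in> accumulation_points x"
    by (rule frequently_in_compact_imp_accumulation_point)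
  then show ?thesis
    by blast
qed

lemma connected_accumulation_points:
  fixes x :: "nat \<Rightarrow> 'a::heine_borel"
  assumes bounded: "bounded (range x)"
    and steps: "(\<lambda>n. dist (x (Suc n)) (x n)) \<longlonglongrightarrow> 0"
  shows "connected (accumulation_points x)"
proof (rule ccontr)
  assume "\<not> connected (accumulation_points x)"
  then obtain A B where AB: "closed A" "closed B" "A \<noteq> {}" "B \<noteq> {}"
      "A \<union> B = accumulation_points x" "A \<inter> B = {}"
    unfolding connected_closed_set[OF closed_accumulation_points] by blast
  have "A = A \<inter> accumulation_points x"
    using AB(5) by blast
  then have "compact A"
    using closed_Int_compact[OF AB(1) compact_accumulation_points[OF bounded]] by simp
  then obtain \<delta> where "\<delta> > 0" and \<delta>: "\<forall>a\<in>A. \<forall>b\<in>B. \<delta> \<le> dist a b"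
    using separate_compact_closed[OF _ AB(2,6)] by blast
  define U where "U C = (\<Union>c\<in>C. ball c (\<delta>/3))" for C :: "'a set"
  have sep: "\<forall>y\<in>U A. \<forall>z\<in>U B. \<delta>/3 \<le> dist y z"
  proof (intro ballI)
    fix y z assume "y \<in> U A" "z \<in> U B"
    then obtain a b where "a \<in> A" "b \<in> B" "dist a y < \<delta>/3" "dist b z < \<delta>/3"
      by (auto simp: U_def)
    moreover have "dist a b \<le> dist a y + dist y z + dist b z"
      using dist_triangle[of a b y] dist_triangle[of y b z] dist_commute[of z b] by linarith
    ultimately show "\<delta>/3 \<le> dist y z"
      using \<delta> by fastforce
  qed
  have visits: "\<exists>\<^sub>F n in sequentially. x n \<in> U C" if "c \<in> C" "C \<subseteq> accumulation_points x" for c C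
  proof -
    have "c \<in> accumulation_points x" "\<delta>/3 > 0"
      using that \<open>\<delta> > 0\<close> by auto
    then have "\<exists>\<^sub>F n in sequentially. dist (x n) c < \<delta>/3"
      unfolding accumulation_points_iff_frequently by blast
    then show ?thesis
      by (rule frequently_elim1) (use \<open>c \<in> C\<close> in \<open>auto simp: U_def dist_commute\<close>)
  qed
  obtain a b where "a \<in> A" "b \<in> B"
    using AB(3,4) by blast
  then have "\<exists>\<^sub>F n in sequentially. x n \<in> U A" "\<exists>\<^sub>F n in sequentially. x n \<in> U B"
    using visits AB(5) by blast+
  then have "\<exists>\<^sub>F n in sequentially. x n \<notin> U A \<union> U B"
    using frequently_outside_separated_sets[OF steps _ sep] \<open>\<delta> > 0\<close> by simp
  then have "\<exists>\<^sub>F n in sequentially. x n \<in> closure (range x) - (U A \<union> U B)"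
    by (rule frequently_elim1) (simp add: closure_subset[THEN subsetD])
  moreover have "compact (closure (range x) - (U A \<union> U B))"
    unfolding U_def using bounded by (intro compact_diff open_Un open_UN ballI open_ball) auto
  ultimately obtain p where "p \<in> closure (range x) - (U A \<union> U B)" "p \<in> accumulation_points x"
    using frequently_in_compact_imp_accumulation_point by blast
  moreover have "p \<in> U A \<union> U B" if "p \<in> accumulation_points x"
  proof -
    have "p \<in> A \<or> p \<in> B"
      using that AB(5) by blast
    moreover have "p \<in> ball p (\<delta>/3)"
      using \<open>\<delta> > 0\<close> by simp
    ultimately show ?thesis
      unfolding U_def by blast
  qed
  ultimately show False
    by blast
qed

lemma descent_sequence_trapped_near_accumulation_point:
  fixes x :: "nat \<Rightarrow> 'a::metric_space" and F :: "nat \<Rightarrow> real"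
  assumes a: "a \<in> accumulation_points x" and "convergent F" and "\<gamma> > 0" and "\<rho> > 0"
    and decrease: "\<forall>\<^sub>F k in sequentially.
      dist (x k) a < 2 * \<rho> \<longrightarrow> \<gamma> * dist (x (Suc k)) (x k) \<le> F k - F (Suc k)"
  shows "\<forall>\<^sub>F k in sequentially. dist (x k) a < 2 * \<rho>"
proof -
  obtain N1 where N1: "\<And>k. k \<ge> N1 \<Longrightarrow> dist (x k) a < 2 * \<rho> \<Longrightarrow>
      \<gamma> * dist (x (Suc k)) (x k) \<le> F k - F (Suc k)"
    using decrease unfolding eventually_sequentially by blast
  obtain N2 where N2: "\<And>i j. i \<ge> N2 \<Longrightarrow> j \<ge> N2 \<Longrightarrow> dist (F i) (F j) < \<gamma> * \<rho>"
    using convergent_Cauchy[OF \<open>convergent F\<close>] \<open>\<gamma> > 0\<close> \<open>\<rho> > 0\<close>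
    unfolding Cauchy_def by (meson mult_pos_pos)
  obtain n where n: "n \<ge> max N1 N2" "dist (x n) a < \<rho>"
    using a \<open>\<rho> > 0\<close> unfolding accumulation_points_iff_frequently frequently_sequentially by blast
  have "dist (x (n + i)) a < 2 * \<rho> \<and> \<gamma> * dist (x (n + i)) (x n) \<le> F n - F (n + i)" for i
  proof (induction i)
    case 0
    show ?case using n(2) \<open>\<rho> > 0\<close> by simp
  next
    case (Suc i)
    let ?k = "n + i"
    have "\<gamma> * dist (x (Suc ?k)) (x n) \<le> \<gamma> * (dist (x ?k) (x n) + dist (x (Suc ?k)) (x ?k))"
      using dist_triangle[of "x (Suc ?k)" "x n" "x ?k"] \<open>\<gamma> > 0\<close> by (simp add: dist_commute)
    also have "\<dots> \<le> F n - F (Suc ?k)"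
      using Suc.IH N1[of ?k] n(1) by (simp add: distrib_left)
    finally have length: "\<gamma> * dist (x (Suc ?k)) (x n) \<le> F n - F (Suc ?k)" .
    moreover have "F n - F (Suc ?k) < \<gamma> * \<rho>"
      using N2[of n "Suc ?k"] n(1) by (simp add: dist_real_def)
    ultimately have "\<gamma> * dist (x (Suc ?k)) (x n) < \<gamma> * \<rho>"
      by linarith
    then have "dist (x (Suc ?k)) (x n) < \<rho>"
      using \<open>\<gamma> > 0\<close> by simp
    then have "dist (x (Suc ?k)) a < 2 * \<rho>"
      using dist_triangle[of "x (Suc ?k)" a "x n"] n(2) by linarith
    then show ?case
      using length by simp
  qed
  then show ?thesis
    unfolding eventually_sequentially by (metis le_add_diff_inverse)
qed

section \<open>Descent estimates\<close>

lemma not_bdd_below_if_decrease_dominates_divergent_sum: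
  fixes F t :: "nat \<Rightarrow> real"
  assumes decrease: "\<forall>\<^sub>F k in sequentially. \<gamma> * t k \<le> F k - F (Suc k)" and "\<gamma> > 0"
    and divergent: "filterlim (\<lambda>n. \<Sum>k<n. t k) at_top sequentially"
  shows "\<not> bdd_below (range F)"
proof
  assume "bdd_below (range F)"
  then obtain m where m: "\<And>n. m \<le> F n"
    by (auto simp: bdd_below_def)
  obtain N where N: "\<And>k. k \<ge> N \<Longrightarrow> \<gamma> * t k \<le> F k - F (Suc k)"
    using decrease unfolding eventually_sequentially by blast
  have telescope: "\<gamma> * (\<Sum>k<n. t k) \<le> \<gamma> * (\<Sum>k<N. t k) + F N - F n" if "N \<le> n" for n
    using that
  proof (induction rule: dec_induct)
    case (step n)
    then show ?case
      using N[of n] by (simp add: distrib_left)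
  qed simp
  have "\<forall>\<^sub>F n in sequentially. (\<Sum>k<N. t k) + (F N - m + 1) / \<gamma> \<le> (\<Sum>k<n. t k) \<and> N \<le> n"
    using divergent unfolding filterlim_at_top by (intro eventually_conj eventually_ge_at_top) auto
  then obtain n where n: "(\<Sum>k<N. t k) + (F N - m + 1) / \<gamma> \<le> (\<Sum>k<n. t k)" "N \<le> n"
    by (auto simp: eventually_sequentially)
  have "\<gamma> * (\<Sum>k<N. t k) + (F N - m + 1) = \<gamma> * ((\<Sum>k<N. t k) + (F N - m + 1) / \<gamma>)"
    using \<open>\<gamma> > 0\<close> by (simp add: field_simps)
  also have "\<dots> \<le> \<gamma> * (\<Sum>k<n. t k)"
    using n(1) \<open>\<gamma> > 0\<close> by (intro mult_left_mono) auto
  finally have "\<gamma> * (\<Sum>k<N. t k) + (F N - m + 1) \<le> \<gamma> * (\<Sum>k<n. t k)" .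
  then show False
    using telescope[OF n(2)] m[of n] by linarith
qed

lemma filterlim_partial_sums_at_top_if_bounded_below:
  fixes t :: "nat \<Rightarrow> real"
  assumes "\<tau> > 0" and "\<And>k. \<tau> \<le> t k"
  shows "filterlim (\<lambda>n. \<Sum>k<n. t k) at_top sequentially"
proof (rule filterlim_at_top_mono)
  show "filterlim (\<lambda>n. real n * \<tau>) at_top sequentially"
    by (rule filterlim_at_top_mult_tendsto_pos[OF tendsto_const \<open>\<tau> > 0\<close> filterlim_real_sequentially])
  show "\<forall>\<^sub>F n in sequentially. real n * \<tau> \<le> (\<Sum>k<n. t k)"
    using sum_mono[of "{..<_}" "\<lambda>_. \<tau>" t] assms(2) by (intro always_eventually) auto
qed

lemma decseq_tendsto_zero_if_frequent_contraction:
  fixes e :: "nat \<Rightarrow> real"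
  assumes nonneg: "\<And>k. 0 \<le> e k" and "decseq e" and "q < 1"
    and contraction: "\<exists>\<^sub>F k in sequentially. e (Suc k) = q * e k"
  shows "e \<longlonglongrightarrow> 0"
proof -
  obtain l where l: "e \<longlonglongrightarrow> l" "\<And>k. l \<le> e k"
    using decseq_convergent[OF \<open>decseq e\<close>] nonneg by metis
  have "l \<ge> 0"
    using LIMSEQ_le_const[OF l(1)] nonneg by blast
  have "\<not> l > 0"
  proof
    assume "l > 0"
    have "(\<lambda>k. e k - e (Suc k)) \<longlonglongrightarrow> l - l"
      using l(1) by (intro tendsto_diff LIMSEQ_Suc)
    then have "\<forall>\<^sub>F k in sequentially. e k - e (Suc k) < (1 - q) * l"
      using \<open>l > 0\<close> \<open>q < 1\<close> by (intro order_tendstoD(2)) auto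
    then obtain N where "\<And>k. k \<ge> N \<Longrightarrow> e k - e (Suc k) < (1 - q) * l"
      unfolding eventually_sequentially by blast
    moreover obtain k where "k \<ge> N" "e (Suc k) = q * e k"
      using contraction unfolding frequently_sequentially by blast
    moreover have "(1 - q) * l \<le> (1 - q) * e k"
      using l(2) \<open>q < 1\<close> by (intro mult_left_mono) auto
    ultimately show False
      by (fastforce simp: algebra_simps)
  qed
  then show ?thesis
    using l(1) \<open>l \<ge> 0\<close> by simp
qed

lemma inexact_direction_descent:
  fixes G v :: "'a::real_inner"
  assumes err: "norm (G - v) \<le> e" and "e < norm G"
  defines "D \<equiv> - ((norm G - e) / norm G) *\<^sub>R G"
  shows "v \<bullet> D \<le> - (norm D)\<^sup>2" and "norm D = norm G - e"
proof -
  have "0 \<le> e"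
    using err norm_ge_zero order_trans by blast
  define s where "s = (norm G - e) / norm G"
  have "norm G > 0"
    using \<open>e < norm G\<close> \<open>0 \<le> e\<close> by linarith
  then have "s > 0" and s: "s * norm G = norm G - e"
    using \<open>e < norm G\<close> by (simp_all add: s_def)
  show norm_D: "norm D = norm G - e"
    using \<open>s > 0\<close> s by (simp add: D_def flip: s_def)
  have "(G - v) \<bullet> G \<le> e * norm G"
    using norm_cauchy_schwarz[of "G - v" G] mult_right_mono[OF err norm_ge_zero[of G]] by linarith
  then have "(norm G)\<^sup>2 - e * norm G \<le> v \<bullet> G"
    by (simp add: inner_diff_left power2_norm_eq_inner)
  then have "v \<bullet> D \<le> - s * ((norm G)\<^sup>2 - e * norm G)"
    using \<open>s > 0\<close> by (simp add: D_def flip: s_def)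
  also have "\<dots> = - (s * norm G) * (norm G - e)"
    by (simp add: power2_eq_square algebra_simps)
  also have "\<dots> = - (norm D)\<^sup>2"
    by (simp add: s norm_D power2_eq_square algebra_simps)
  finally show "v \<bullet> D \<le> - (norm D)\<^sup>2" .
qed

section \<open>Runs of Algorithm IRG\<close>

text \<open>
  Both stepsize rules are captured by the margin
  \<open>\<delta>\<close>: eventually \<open>t\<^sub>k \<le> (2 - \<delta>)/L\<close> (with \<open>\<delta> = 1\<close> for diminishing steps).
\<close>

locale IRG_run =
  fixes f :: "'a::euclidean_space \<Rightarrow> real" and df :: "'a \<Rightarrow> 'a"
    and L \<delta> \<mu> \<theta> :: real and x g d :: "nat \<Rightarrow> 'a" and eps r t :: "nat \<Rightarrow> real"
  assumes IRG: "IRG df \<mu> \<theta> eps x g eps r d t"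
    and descent: "L_descent f df L"
    and bdd_below_values: "bdd_below (range (\<lambda>k. f (x k)))"
    and \<delta>_pos: "\<delta> > 0"
    and short_steps: "\<forall>\<^sub>F k in sequentially. L * t k \<le> 2 - \<delta>"
    and bdd_above_steps: "bdd_above (range t)"
    and divergent_steps: "filterlim (\<lambda>n. \<Sum>k<n. t k) at_top sequentially"
begin

lemma eps_pos: "eps k > 0"
  and factors: "0 < \<mu>" "\<mu> < 1" "0 < \<theta>" "\<theta> < 1"
  and t_pos: "t k > 0"
  and gradient_error: "norm (g k - df (x k)) \<le> eps k"
  and x_Suc: "x (Suc k) = x k + t k *\<^sub>R d k"
  using IRG by (auto simp: IRG_def)

lemma null_step:
  assumes "norm (g k) \<le> r k + eps k"
  shows "r (Suc k) = \<mu> * r k" and "eps (Suc k) = \<theta> * eps k" and "d k = 0"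
  using IRG assms unfolding IRG_def by metis+

lemma serious_step:
  assumes "\<not> norm (g k) \<le> r k + eps k"
  shows "r (Suc k) = r k" and "eps (Suc k) = eps k"
    and "d k = - ((norm (g k) - eps k) / norm (g k)) *\<^sub>R g k"
  using IRG assms unfolding IRG_def by metis+

lemma r_pos: "r k > 0"
proof (induction k)
  case 0
  show ?case using IRG by (simp add: IRG_def)
next
  case (Suc k)
  then show ?case
    using null_step(1)[of k] serious_step(1)[of k] factors
    by (cases "norm (g k) \<le> r k + eps k") auto
qed

lemma serious_step_direction:
  assumes "\<not> norm (g k) \<le> r k + eps k"
  shows "df (x k) \<bullet> d k \<le> - (norm (d k))\<^sup>2" and "norm (d k) = norm (g k) - eps k"
proof -
  have "eps k < norm (g k)"
    using assms r_pos[of k] by linarith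
  then show "df (x k) \<bullet> d k \<le> - (norm (d k))\<^sup>2" "norm (d k) = norm (g k) - eps k"
    using inexact_direction_descent[OF gradient_error] serious_step(3)[OF assms] by simp_all
qed

lemma direction_descent: "df (x k) \<bullet> d k \<le> - (norm (d k))\<^sup>2"
  using serious_step_direction(1)[of k] null_step(3)[of k] by fastforce

lemma norm_direction_close_to_gradient: "\<bar>norm (d k) - norm (df (x k))\<bar> \<le> r k + 2 * eps k"
proof -
  have "\<bar>norm (g k) - norm (df (x k))\<bar> \<le> eps k"
    using gradient_error[of k] norm_triangle_ineq3 order_trans by blast
  then show ?thesis
    using null_step(3)[of k] serious_step_direction(2)[of k] r_pos[of k] eps_pos[of k]
    by (cases "norm (g k) \<le> r k + eps k") auto
qed

lemma dist_step: "dist (x (Suc k)) (x k) = t k * norm (d k)"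
  using t_pos[of k] by (simp add: x_Suc dist_norm)

lemma sufficient_decrease:
  "f (x (Suc k)) \<le> f (x k) - t k * (1 - L * t k / 2) * (norm (d k))\<^sup>2"
proof -
  have "f (x (Suc k)) \<le> f (x k) + t k * (df (x k) \<bullet> d k) + L / 2 * (t k * norm (d k))\<^sup>2"
    using descent dist_step[of k] unfolding L_descent_def
    by (metis dist_norm inner_scaleR_right x_Suc add_diff_cancel_left')
  also have "\<dots> \<le> f (x k) - t k * (norm (d k))\<^sup>2 + L / 2 * (t k * norm (d k))\<^sup>2"
    using mult_left_mono[OF direction_descent less_imp_le[OF t_pos]] by simp
  also have "\<dots> = f (x k) - t k * (1 - L * t k / 2) * (norm (d k))\<^sup>2"
    by (simp add: power2_eq_square algebra_simps)
  finally show ?thesis .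
qed

lemma eventually_sufficient_decrease:
  "\<forall>\<^sub>F k in sequentially. \<delta> / 2 * (t k * (norm (d k))\<^sup>2) \<le> f (x k) - f (x (Suc k))"
  using short_steps
proof eventually_elim
  case (elim k)
  then have "\<delta> / 2 * (t k * (norm (d k))\<^sup>2) \<le> (1 - L * t k / 2) * (t k * (norm (d k))\<^sup>2)"
    using t_pos[of k] by (intro mult_right_mono) auto
  then show ?case
    using sufficient_decrease[of k] by (simp add: algebra_simps)
qed

lemma convergent_values: "convergent (\<lambda>k. f (x k))"
proof -
  obtain N where N: "\<And>k. k \<ge> N \<Longrightarrow> \<delta> / 2 * (t k * (norm (d k))\<^sup>2) \<le> f (x k) - f (x (Suc k))"
    using eventually_sufficient_decrease unfolding eventually_sequentially by blast
  have "0 \<le> \<delta> / 2 * (t k * (norm (d k))\<^sup>2)" for k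
    using \<delta>_pos t_pos[of k] by simp
  then have "decseq (\<lambda>n. f (x (n + N)))"
    unfolding decseq_Suc_iff using N by (metis add_Suc le_add2 order_trans diff_ge_0_iff_ge)
  moreover obtain m where "\<And>k. m \<le> f (x k)"
    using bdd_below_values by (auto simp: bdd_below_def)
  ultimately obtain l where "(\<lambda>n. f (x (n + N))) \<longlonglongrightarrow> l"
    using decseq_convergent[of "\<lambda>n. f (x (n + N))" m] by blast
  then show ?thesis
    by (auto simp: convergent_def intro: LIMSEQ_offset)
qed

lemma decrease_tendsto_zero: "(\<lambda>k. f (x k) - f (x (Suc k))) \<longlonglongrightarrow> 0"
proof -
  obtain l where "(\<lambda>k. f (x k)) \<longlonglongrightarrow> l"
    using convergent_values by (auto simp: convergent_def)
  then show ?thesis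
    using tendsto_diff[OF _ LIMSEQ_Suc] by fastforce
qed

lemma steps_tendsto_zero: "(\<lambda>k. dist (x (Suc k)) (x k)) \<longlonglongrightarrow> 0"
proof -
  obtain T where T: "\<And>k. t k \<le> T"
    using bdd_above_steps by (auto simp: bdd_above_def)
  have "\<forall>\<^sub>F k in sequentially.
      norm ((dist (x (Suc k)) (x k))\<^sup>2) \<le> 2 * T / \<delta> * (f (x k) - f (x (Suc k)))"
    using eventually_sufficient_decrease
  proof eventually_elim
    case (elim k)
    have "(dist (x (Suc k)) (x k))\<^sup>2 = t k * (t k * (norm (d k))\<^sup>2)"
      by (simp add: dist_step power2_eq_square)
    also have "\<dots> \<le> T * (t k * (norm (d k))\<^sup>2)"
      using T[of k] t_pos[of k] by (intro mult_right_mono) auto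
    also have "\<dots> \<le> T * (2 / \<delta> * (f (x k) - f (x (Suc k))))"
      using elim \<delta>_pos T[of k] t_pos[of k] by (intro mult_left_mono) (auto simp: field_simps)
    also have "\<dots> = 2 * T / \<delta> * (f (x k) - f (x (Suc k)))"
      by simp
    finally show ?case
      by simp
  qed
  moreover have "(\<lambda>k. 2 * T / \<delta> * (f (x k) - f (x (Suc k)))) \<longlonglongrightarrow> 0"
    using tendsto_mult_right_zero[OF decrease_tendsto_zero] .
  ultimately have "(\<lambda>k. (dist (x (Suc k)) (x k))\<^sup>2) \<longlonglongrightarrow> 0"
    by (rule Lim_null_comparison)
  then show ?thesis
    using tendsto_real_sqrt by fastforce
qed

lemma eventually_decrease_if_long_direction:
  assumes "c \<ge> 0"
  shows "\<forall>\<^sub>F k in sequentially. c \<le> norm (d k) \<longrightarrow>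
      \<delta> / 2 * c * dist (x (Suc k)) (x k) \<le> f (x k) - f (x (Suc k)) \<and>
      \<delta> / 2 * c\<^sup>2 * t k \<le> f (x k) - f (x (Suc k))"
  using eventually_sufficient_decrease
proof eventually_elim
  case (elim k)
  show ?case
  proof
    assume long: "c \<le> norm (d k)"
    have "c * (t k * norm (d k)) \<le> t k * (norm (d k))\<^sup>2"
      using mult_right_mono[OF long, of "t k * norm (d k)"] t_pos[of k]
      by (simp add: power2_eq_square mult_ac)
    then have "\<delta> / 2 * c * dist (x (Suc k)) (x k) \<le> \<delta> / 2 * (t k * (norm (d k))\<^sup>2)"
      using \<delta>_pos by (simp add: dist_step mult.assoc)
    moreover have "c\<^sup>2 * t k \<le> t k * (norm (d k))\<^sup>2"
      using power_mono[OF long \<open>c \<ge> 0\<close>, of 2] t_pos[of k] by (simp add: mult.commute)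
    then have "\<delta> / 2 * c\<^sup>2 * t k \<le> \<delta> / 2 * (t k * (norm (d k))\<^sup>2)"
      using \<delta>_pos by (simp add: mult.assoc)
    ultimately show "\<delta> / 2 * c * dist (x (Suc k)) (x k) \<le> f (x k) - f (x (Suc k)) \<and>
        \<delta> / 2 * c\<^sup>2 * t k \<le> f (x k) - f (x (Suc k))"
      using elim by linarith
  qed
qed

lemma frequently_null_step: "\<exists>\<^sub>F k in sequentially. norm (g k) \<le> r k + eps k"
proof (rule ccontr)
  assume "\<not> (\<exists>\<^sub>F k in sequentially. norm (g k) \<le> r k + eps k)"
  then obtain N where serious: "\<And>k. k \<ge> N \<Longrightarrow> \<not> norm (g k) \<le> r k + eps k"
    by (auto simp: not_frequently eventually_sequentially)
  have r_const: "r k = r N" if "N \<le> k" for k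
    using that by (induction rule: dec_induct) (simp_all add: serious_step(1)[OF serious])
  have "\<forall>\<^sub>F k in sequentially. r N \<le> norm (d k)"
    unfolding eventually_sequentially
    using serious serious_step_direction(2) r_const by (metis less_imp_le not_le diff_less_eq add.commute)
  then have "\<forall>\<^sub>F k in sequentially. \<delta> / 2 * (r N)\<^sup>2 * t k \<le> f (x k) - f (x (Suc k))"
    using eventually_decrease_if_long_direction[OF less_imp_le[OF r_pos[of N]]]
    by eventually_elim auto
  moreover have "\<delta> / 2 * (r N)\<^sup>2 > 0"
    using \<delta>_pos r_pos[of N] by simp
  ultimately show False
    using not_bdd_below_if_decrease_dominates_divergent_sum[OF _ _ divergent_steps, where F="\<lambda>k. f (x k)"]
      bdd_below_values by blast
qed

lemma decseq_eps: "decseq eps"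
  unfolding decseq_Suc_iff
proof
  fix k
  have "\<theta> * eps k \<le> eps k"
    using mult_right_mono[of \<theta> 1 "eps k"] factors eps_pos[of k] by simp
  then show "eps (Suc k) \<le> eps k"
    using null_step(2)[of k] serious_step(2)[of k] by (cases "norm (g k) \<le> r k + eps k") auto
qed

lemma decseq_r: "decseq r"
  unfolding decseq_Suc_iff
proof
  fix k
  have "\<mu> * r k \<le> r k"
    using mult_right_mono[of \<mu> 1 "r k"] factors r_pos[of k] by simp
  then show "r (Suc k) \<le> r k"
    using null_step(1)[of k] serious_step(1)[of k] by (cases "norm (g k) \<le> r k + eps k") auto
qed

lemma eps_tendsto_zero: "eps \<longlonglongrightarrow> 0"
proof (rule decseq_tendsto_zero_if_frequent_contraction[OF less_imp_le[OF eps_pos] decseq_eps])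
  show "\<exists>\<^sub>F k in sequentially. eps (Suc k) = \<theta> * eps k"
    using frequently_null_step by (rule frequently_elim1) (rule null_step(2))
qed (use factors in simp)

lemma r_tendsto_zero: "r \<longlonglongrightarrow> 0"
proof (rule decseq_tendsto_zero_if_frequent_contraction[OF less_imp_le[OF r_pos] decseq_r])
  show "\<exists>\<^sub>F k in sequentially. r (Suc k) = \<mu> * r k"
    using frequently_null_step by (rule frequently_elim1) (rule null_step(1))
qed (use factors in simp)

lemma stationary_accumulation_point:
  assumes a: "a \<in> accumulation_points x" and "isCont df a"
  shows "df a = 0"
proof (rule ccontr)
  assume "df a \<noteq> 0"
  define c where "c = norm (df a)"
  have "c > 0"
    using \<open>df a \<noteq> 0\<close> by (simp add: c_def)
  obtain \<rho> where "\<rho> > 0" and near: "\<And>y. dist y a < 2 * \<rho> \<Longrightarrow> c / 2 \<le> norm (df y)"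
  proof -
    have "c / 2 > 0"
      using \<open>c > 0\<close> by simp
    then obtain \<rho>' where "\<rho>' > 0" and \<rho>': "\<And>y. dist y a < \<rho>' \<Longrightarrow> dist (df y) (df a) < c / 2"
      using \<open>isCont df a\<close> unfolding continuous_at_eps_delta by blast
    have "c / 2 \<le> norm (df y)" if "dist y a < 2 * (\<rho>' / 2)" for y
      using \<rho>'[of y] that norm_triangle_ineq2[of "df a" "df y"]
      by (simp add: c_def dist_norm norm_minus_commute)
    then show thesis
      using that[of "\<rho>' / 2"] \<open>\<rho>' > 0\<close> by simp
  qed
  have "(\<lambda>k. r k + 2 * eps k) \<longlonglongrightarrow> 0 + 2 * 0"
    by (intro tendsto_intros r_tendsto_zero eps_tendsto_zero)
  then have "\<forall>\<^sub>F k in sequentially. r k + 2 * eps k < c / 4"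
    using \<open>c > 0\<close> by (intro order_tendstoD(2)) auto
  then have long: "\<forall>\<^sub>F k in sequentially. dist (x k) a < 2 * \<rho> \<longrightarrow> c / 4 \<le> norm (d k)"
  proof eventually_elim
    case (elim k)
    show ?case
      using near[of "x k"] norm_direction_close_to_gradient[of k, unfolded abs_le_iff] elim
      by linarith
  qed
  have decrease: "\<forall>\<^sub>F k in sequentially. dist (x k) a < 2 * \<rho> \<longrightarrow>
      \<delta> / 2 * (c / 4) * dist (x (Suc k)) (x k) \<le> f (x k) - f (x (Suc k)) \<and>
      \<delta> / 2 * (c / 4)\<^sup>2 * t k \<le> f (x k) - f (x (Suc k))"
    using long eventually_decrease_if_long_direction[of "c / 4"] \<open>c > 0\<close>
    by (auto elim: eventually_elim2)
  then have "\<forall>\<^sub>F k in sequentially. dist (x k) a < 2 * \<rho> \<longrightarrow>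
      \<delta> / 2 * (c / 4) * dist (x (Suc k)) (x k) \<le> f (x k) - f (x (Suc k))"
    by (rule eventually_mono) blast
  moreover have "\<delta> / 2 * (c / 4) > 0"
    using \<delta>_pos \<open>c > 0\<close> by simp
  ultimately have "\<forall>\<^sub>F k in sequentially. dist (x k) a < 2 * \<rho>"
    using descent_sequence_trapped_near_accumulation_point[OF a convergent_values _ \<open>\<rho> > 0\<close>]
    by blast
  with decrease have "\<forall>\<^sub>F k in sequentially. \<delta> / 2 * (c / 4)\<^sup>2 * t k \<le> f (x k) - f (x (Suc k))"
    by eventually_elim auto
  moreover have "\<delta> / 2 * (c / 4)\<^sup>2 > 0"
    using \<delta>_pos \<open>c > 0\<close> by simp
  ultimately show False
    using not_bdd_below_if_decrease_dominates_divergent_sum[OF _ _ divergent_steps, where F="\<lambda>k. f (x k)"]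
      bdd_below_values by blast
qed

lemma gradient_tendsto_zero_if_steps_bounded_below:
  assumes "\<tau> > 0" and "\<And>k. \<tau> \<le> t k"
  shows "(\<lambda>k. df (x k)) \<longlonglongrightarrow> 0"
proof -
  have "\<forall>\<^sub>F k in sequentially. norm ((norm (d k))\<^sup>2) \<le> 2 / (\<delta> * \<tau>) * (f (x k) - f (x (Suc k)))"
    using eventually_sufficient_decrease
  proof eventually_elim
    case (elim k)
    have "\<delta> / 2 * (\<tau> * (norm (d k))\<^sup>2) \<le> \<delta> / 2 * (t k * (norm (d k))\<^sup>2)"
      using assms(2)[of k] \<delta>_pos by (intro mult_left_mono mult_right_mono) auto
    then have "\<delta> / 2 * (\<tau> * (norm (d k))\<^sup>2) \<le> f (x k) - f (x (Suc k))"
      using elim by linarith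
    then show ?case
      using \<delta>_pos \<open>\<tau> > 0\<close> by (simp add: field_simps)
  qed
  then have "(\<lambda>k. (norm (d k))\<^sup>2) \<longlonglongrightarrow> 0"
    by (rule Lim_null_comparison) (rule tendsto_mult_right_zero[OF decrease_tendsto_zero])
  then have "(\<lambda>k. norm (d k)) \<longlonglongrightarrow> 0"
    using tendsto_real_sqrt by fastforce
  then have "(\<lambda>k. norm (d k) + (r k + 2 * eps k)) \<longlonglongrightarrow> 0 + (0 + 2 * 0)"
    by (intro tendsto_intros r_tendsto_zero eps_tendsto_zero)
  then have bound_tendsto_zero: "(\<lambda>k. norm (d k) + (r k + 2 * eps k)) \<longlonglongrightarrow> 0"
    by simp
  have "norm (df (x k)) \<le> norm (d k) + (r k + 2 * eps k)" for k
    using norm_direction_close_to_gradient[of k] by linarith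
  then show ?thesis
    by (rule Lim_null_comparison[OF always_eventually[OF allI] bound_tendsto_zero])
qed

end

lemma IRG_run_if_step_rule:
  fixes f :: "'a::euclidean_space \<Rightarrow> real"
  assumes "IRG df \<mu> \<theta> eps x g eps r d t" and "L_descent f df L"
    and "bdd_below (range (\<lambda>k. f (x k)))" and "L > 0"
    and "diminishing_steps t \<or> constant_type_steps L t"
  obtains \<delta> where "IRG_run f df L \<delta> \<mu> \<theta> x g d eps r t"
proof (cases "constant_type_steps L t")
  case True
  then obtain \<delta> \<tau> where "0 < \<delta>" "0 < \<tau>" and steps: "\<And>k. \<tau> \<le> t k \<and> t k \<le> (2 - \<delta>) / L"
    unfolding constant_type_steps_def by blast
  moreover have "bdd_above (range t)"
    using steps by (auto intro: bdd_aboveI[of _ "(2 - \<delta>) / L"])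
  ultimately have "IRG_run f df L \<delta> \<mu> \<theta> x g d eps r t"
    using assms(1-4) filterlim_partial_sums_at_top_if_bounded_below[of \<tau> t]
    by unfold_locales (auto simp: pos_le_divide_eq mult.commute intro!: always_eventually)
  then show thesis
    by (rule that)
next
  case False
  then have dim: "diminishing_steps t"
    using assms(5) by blast
  have "\<forall>\<^sub>F k in sequentially. t k < 1 / L"
    using dim \<open>L > 0\<close> by (intro order_tendstoD(2)) (auto simp: diminishing_steps_def)
  then have "\<forall>\<^sub>F k in sequentially. L * t k \<le> 2 - 1"
    by eventually_elim (use \<open>L > 0\<close> in \<open>simp add: field_simps\<close>)
  moreover have "bdd_above (range t)"
    using dim unfolding diminishing_steps_def bdd_above_def decseq_def by (metis rangeE le0)
  ultimately have "IRG_run f df L 1 \<mu> \<theta> x g d eps r t"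
    using assms(1-3) dim by unfold_locales (auto simp: diminishing_steps_def)
  then show thesis
    by (rule that)
qed

theorem mainTheorem11:
  fixes f :: "'a::euclidean_space \<Rightarrow> real" and df :: "'a \<Rightarrow> 'a"
    and x g d :: "nat \<Rightarrow> 'a" and eps r t :: "nat \<Rightarrow> real"
    and L \<mu> \<theta> :: real
  assumes "C1_with_gradient f df"
    and "L > 0" and "L_descent f df L"
    and "IRG df \<mu> \<theta> eps x g eps r d t"
    and "diminishing_steps t \<or> constant_type_steps L t"
    and "bdd_below (range (\<lambda>k. f (x k)))"
  shows "(decseq eps \<and> eps \<longlonglongrightarrow> 0 \<and> decseq r \<and> r \<longlonglongrightarrow> 0)
    \<and> (\<forall>a \<in> accumulation_points x. df a = 0)
    \<and> (bounded (range x) \<longrightarrow>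
         accumulation_points x \<noteq> {} \<and> compact (accumulation_points x)
         \<and> connected (accumulation_points x))
    \<and> (\<forall>a \<in> accumulation_points x.
         (\<exists>e>0. \<forall>b \<in> accumulation_points x. dist b a < e \<longrightarrow> b = a) \<longrightarrow> x \<longlonglongrightarrow> a)
    \<and> (constant_type_steps L t \<longrightarrow> (\<lambda>k. df (x k)) \<longlonglongrightarrow> 0)"
proof -
  obtain \<delta> where "IRG_run f df L \<delta> \<mu> \<theta> x g d eps r t"
    using IRG_run_if_step_rule assms(2-6) by metis
  then interpret IRG_run f df L \<delta> \<mu> \<theta> x g d eps r t .
  have "isCont df a" for a
    using assms(1) by (simp add: C1_with_gradient_def continuous_on_eq_continuous_at)
  then have "\<forall>a \<in> accumulation_points x. df a = 0"
    using stationary_accumulation_point by blast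
  moreover have "constant_type_steps L t \<longrightarrow> (\<lambda>k. df (x k)) \<longlonglongrightarrow> 0"
    using gradient_tendsto_zero_if_steps_bounded_below unfolding constant_type_steps_def by blast
  ultimately show ?thesis
    using decseq_eps eps_tendsto_zero decseq_r r_tendsto_zero
      accumulation_points_nonempty compact_accumulation_points
      connected_accumulation_points[OF _ steps_tendsto_zero]
      isolated_accumulation_point_imp_LIMSEQ[OF steps_tendsto_zero]
    by blast
qed

end
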